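(* Let $t$ be a table with $n$ rows, and fix a predicate such that exactly $pn$ rows of $t$ satisfy it, where $p\in(0,1]$. Draw a sample of $k\ge1$ rows from $t$ uniformly at random with replacement (i.e., $k$ i.i.d. uniform draws), let $\hat X$ be the number of sampled rows satisfying the predicate, and estimate the cardinality by $\mathrm{est}=\frac{n}{k}\hat X$, the true cardinality being $\mathrm{true}=pn$. Let $\sigma^2=p(1-p)$. Then for every $q\ge1$, $$\mathbb{P}(\text{Q-error}\le q)\ \ge\ 1-\Omega-\Psi,$$ where $$\Omega=\min\Bigg(\Big(\frac{e^{q-1}}{q^{q}}\Big)^{pk},\ \exp\Big(-\frac{k(pq-p)^2}{2\sigma^2+2(pq-p)/3}\Big),\ \exp\big(-2p^2(q-1)^2k\big)\Bigg),$$ and, when $pq>1$, $$\Psi=\min\Bigg(\Big(e^{\frac1q-1}q^{\frac1q}\Big)^{pk},\ \exp\Big(-\frac{k(p-p/q)^2}{2\sigma^2+2(p-p/q)/3}\Big),\ \exp\Big(-\frac{2k(pq-1)^2}{q^2}\Big)\Bigg),$$ while, when $pq\le1$, $$\Psi=\min\Bigg(\Big(e^{\frac1q-1}q^{\frac1q}\Big)^{pk},\ \exp\Big(-\frac{k(p-p/q)^2}{2\sigma^2+2(p-p/q)/3}\Big)\Bigg).$$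
   Context: The Q-error of an estimate is $\max\big(\frac{\mathrm{true}'}{\mathrm{est}'},\frac{\mathrm{est}'}{\mathrm{true}'}\big)$, where $\mathrm{est}'=\max(\mathrm{est},1)$ and $\mathrm{true}'=\max(\mathrm{true},1)$ (to avoid division by zero). $\Omega$ bounds the probability of over-estimation ($\mathrm{est}\ge q\cdot\mathrm{true}$) and $\Psi$ the probability of under-estimation ($\mathrm{est}\le \mathrm{true}/q$). *)

theory Defs
  imports "HOL-Probability.Probability"
begin

definition qerror :: "real \<Rightarrow> real \<Rightarrow> real" where
  "qerror est tru = max (max tru 1 / max est 1) (max est 1 / max tru 1)"

text \<open>Sample of k rows drawn i.i.d. uniformly (with replacement) from the row indices
  {0..<n}: a random function from {0..<k} (draw number) to row indices.\<close>
definition sample_pmf :: "nat \<Rightarrow> nat \<Rightarrow> (nat \<Rightarrow> nat) pmf" where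
  "sample_pmf n k = Pi_pmf {..<k} 0 (\<lambda>_. pmf_of_set {..<n})"

definition Omega_bound :: "real \<Rightarrow> real \<Rightarrow> real \<Rightarrow> real" where
  "Omega_bound p q k =
     (let \<sigma>2 = p * (1 - p) in
      min ((exp (q - 1) / q powr q) powr (p * k))
        (min (exp (- (k * (p * q - p)^2) / (2 * \<sigma>2 + 2 * (p * q - p) / 3)))
             (exp (- 2 * p^2 * (q - 1)^2 * k))))"

definition Psi_bound :: "real \<Rightarrow> real \<Rightarrow> real \<Rightarrow> real" where
  "Psi_bound p q k =
     (let \<sigma>2 = p * (1 - p);
          b = min ((exp (1 / q - 1) * q powr (1 / q)) powr (p * k))
                  (exp (- (k * (p - p / q)^2) / (2 * \<sigma>2 + 2 * (p - p / q) / 3)))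
      in if p * q > 1 then min b (exp (- 2 * k * (p * q - 1)^2 / q^2)) else b)"

end

theory Submission
  imports Defs
begin

(* The number X of sampled rows satisfying the predicate is binomially distributed with
   parameters k and p, and since the true cardinality pn is at least 1 the Q-error can exceed q
   only if X > qpk or X < pk/q.  Each of these tails is bounded by the minimum of three classical
   estimates: the multiplicative Chernoff bound and Bernstein's inequality, both obtained from
   Markov's inequality applied to exp(l X) with E exp(l X) = (p e^l + 1 - p)^k for a suitable l,
   and Hoeffding's inequality. *)

lemma two_mult_three_power_le_fact: "2 * 3 ^ m \<le> (fact (m + 2) :: real)"
proof (induction m)
  case 0
  then show ?case by simp
next
  case (Suc m)
  have "2 * 3 ^ Suc m = 3 * (2 * 3 ^ m :: real)"
    by simp
  also have "\<dots> \<le> real (m + 3) * fact (m + 2)"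
    using Suc by (intro mult_mono) auto
  also have "\<dots> = fact (Suc m + 2)"
    by (simp add: algebra_simps)
  finally show ?case .
qed

lemma exp_le_Bernstein:
  fixes x :: real
  assumes "0 \<le> x" "x < 3"
  shows "exp x \<le> 1 + x + x^2 / (2 * (1 - x / 3))"
proof -
  define g where "g n = (if n < 2 then x^n / fact n else x^2 / 2 * (x / 3)^(n - 2))" for n
  have "(\<lambda>m. x^2 / 2 * (x / 3)^m) sums (x^2 / 2 * (1 / (1 - x / 3)))"
    using assms by (intro sums_mult geometric_sums) auto
  then have "(\<lambda>m. g (m + 2)) sums (x^2 / (2 * (1 - x / 3)))"
    by (simp add: g_def)
  then have "g sums (x^2 / (2 * (1 - x / 3)) + (\<Sum>i<2. g i))"
    by (rule iffD1[OF sums_iff_shift])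
  then have G: "g sums (1 + x + x^2 / (2 * (1 - x / 3)))"
    by (simp add: g_def eval_nat_numeral algebra_simps)
  have E: "(\<lambda>n. x^n / fact n) sums exp x"
    using exp_converges[of x] by (simp add: divide_inverse mult.commute)
  \<comment> \<open>the exponential series is dominated termwise by a geometric series of ratio \<open>x/3\<close>\<close>
  have "x^n / fact n \<le> g n" for n
  proof (cases "n < 2")
    case False
    then obtain m where m: "n = m + 2"
      by (metis add.commute le_Suc_ex not_less)
    have "x^n / fact n \<le> x^n / (2 * 3^m)"
      using two_mult_three_power_le_fact[of m] assms m by (intro divide_left_mono) auto
    also have "\<dots> = x^2 / 2 * (x / 3)^m"
      by (simp add: m power_add power_divide power2_eq_square)
    finally show ?thesis
      using m by (simp add: g_def)
  qed (simp add: g_def)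
  then show ?thesis
    using sums_le[OF _ E G] by blast
qed

lemma exp_le_quadratic_of_nonpos:
  fixes x :: real
  assumes "x \<le> 0"
  shows "exp x \<le> 1 + x + x^2 / 2"
proof -
  obtain t where "exp x = (\<Sum>m<3. x ^ m / fact m) + exp t / fact 3 * x ^ 3"
    using Maclaurin_exp_le[of x 3] by blast
  moreover have "exp t / fact 3 * x ^ 3 \<le> 0"
    using assms by (intro mult_nonneg_nonpos) (auto simp: power_le_zero_eq)
  ultimately show ?thesis
    by (simp add: eval_nat_numeral power2_eq_square)
qed

lemma exp_mult_le_Bernstein:
  fixes l y :: real
  assumes "0 \<le> l" "l < 3" "y \<le> 1"
  shows "exp (l * y) \<le> 1 + l * y + l^2 * y^2 / (2 * (1 - l / 3))"
proof (cases "0 \<le> y")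
  case True
  have "l * y \<le> l"
    using assms True by (simp add: mult_left_le)
  then have "exp (l * y) \<le> 1 + l * y + (l * y)^2 / (2 * (1 - l * y / 3))"
    using exp_le_Bernstein[of "l * y"] True assms by simp
  also have "(l * y)^2 / (2 * (1 - l * y / 3)) \<le> l^2 * y^2 / (2 * (1 - l / 3))"
    using \<open>l * y \<le> l\<close> assms by (auto simp: power_mult_distrib intro!: divide_left_mono)
  finally show ?thesis
    by simp
next
  case False
  then have "exp (l * y) \<le> 1 + l * y + (l * y)^2 / 2"
    using assms by (intro exp_le_quadratic_of_nonpos) (simp add: mult_nonneg_nonpos)
  also have "(l * y)^2 / 2 \<le> (l * y)^2 / (2 * (1 - l / 3))"
    using assms by (intro divide_left_mono) auto
  finally show ?thesis
    by (simp add: power_mult_distrib)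
qed

lemma centered_bernoulli_mgf_le_Bernstein:
  fixes p l \<epsilon> :: real
  assumes "p \<in> {0..1}" "0 \<le> l" "l < 3" "\<bar>\<epsilon>\<bar> = 1"
  shows "p * exp (l * (\<epsilon> * (1 - p))) + (1 - p) * exp (l * (- \<epsilon> * p))
           \<le> exp (p * (1 - p) * l^2 / (2 * (1 - l / 3)))"
proof -
  define D where "D = l^2 / (2 * (1 - l / 3))"
  have \<epsilon>2: "\<epsilon>^2 = 1"
    using assms by (metis abs_mult_self_eq power2_eq_square mult_1_left)
  have "p * exp (l * (\<epsilon> * (1 - p))) + (1 - p) * exp (l * (- \<epsilon> * p))
     \<le> p * (1 + l * (\<epsilon> * (1 - p)) + (\<epsilon> * (1 - p))^2 * D)
       + (1 - p) * (1 + l * (- \<epsilon> * p) + (- \<epsilon> * p)^2 * D)"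
    using assms exp_mult_le_Bernstein[of l "\<epsilon> * (1 - p)"] exp_mult_le_Bernstein[of l "- \<epsilon> * p"]
    by (intro add_mono mult_left_mono) (auto simp: D_def abs_if mult.commute split: if_splits)
  also have "\<dots> = 1 + p * (1 - p) * D * \<epsilon>^2"
    by (simp add: algebra_simps power2_eq_square)
  also have "\<dots> \<le> exp (p * (1 - p) * D)"
    using \<epsilon>2 exp_ge_add_one_self by simp
  finally show ?thesis
    by (simp add: D_def)
qed

lemma binomial_expectation_exp:
  assumes "p \<in> {0..1}"
  shows "measure_pmf.expectation (binomial_pmf k p) (\<lambda>i. exp (l * real i)) = (p * exp l + (1 - p)) ^ k"
proof -
  have "measure_pmf.expectation (binomial_pmf k p) (\<lambda>i. exp (l * real i))
      = (\<Sum>i\<le>k. real (k choose i) * (p * exp l) ^ i * (1 - p) ^ (k - i))"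
    using assms by (simp add: expectation_binomial_pmf' exp_of_nat_mult[symmetric] power_mult_distrib
        mult.commute mult.left_commute)
  also have "\<dots> = (p * exp l + (1 - p)) ^ k"
    by (simp add: binomial_ring)
  finally show ?thesis .
qed

lemma binomial_prob_le_exp_moment:
  assumes "p \<in> {0..1}" and "\<And>i. i \<in> S \<Longrightarrow> l * a \<le> l * real i"
  shows "measure_pmf.prob (binomial_pmf k p) S \<le> exp (- (l * a)) * (p * exp l + (1 - p)) ^ k"
proof -
  have "measure_pmf.prob (binomial_pmf k p) S = measure_pmf.expectation (binomial_pmf k p) (indicator S)"
    by simp
  also have "\<dots> \<le> measure_pmf.expectation (binomial_pmf k p) (\<lambda>i. exp (- (l * a)) * exp (l * real i))"
    using assms by (intro integral_mono) (auto simp: indicator_def simp flip: exp_add)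
  also have "\<dots> = exp (- (l * a)) * (p * exp l + (1 - p)) ^ k"
    using assms by (simp add: binomial_expectation_exp)
  finally show ?thesis .
qed

(* Chernoff's method with l = ln r: for r >= 1 the hypothesis describes an upper tail,
   for r <= 1 a lower tail. *)
lemma binomial_tail_Chernoff:
  assumes "p \<in> {0..1}" "0 < r" "\<And>i. i \<in> S \<Longrightarrow> ln r * (r * p * k) \<le> ln r * real i"
  shows "measure_pmf.prob (binomial_pmf k p) S \<le> (exp (r - 1) / r powr r) powr (p * k)"
proof -
  have "measure_pmf.prob (binomial_pmf k p) S
      \<le> exp (- (ln r * (r * p * k))) * (p * exp (ln r) + (1 - p)) ^ k"
    using assms by (intro binomial_prob_le_exp_moment)
  also have "p * exp (ln r) + (1 - p) = 1 + p * (r - 1)"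
    using assms by (simp add: algebra_simps)
  also have "exp (- (ln r * (r * p * k))) * (1 + p * (r - 1)) ^ k
      \<le> exp (- (ln r * (r * p * k))) * exp (p * (r - 1)) ^ k"
    using assms mult_left_mono[of "-1" "r - 1" p]
    by (intro mult_left_mono power_mono exp_ge_add_one_self) auto
  also have "\<dots> = exp (p * k * (r - 1 - r * ln r))"
    by (simp add: exp_of_nat_mult[symmetric] flip: exp_add) (simp add: algebra_simps)
  also have "\<dots> = (exp (r - 1) / r powr r) powr (p * k)"
    using assms by (simp add: powr_def ln_div)
  finally show ?thesis .
qed

lemma binomial_tail_Bernstein:
  fixes \<epsilon> t :: real
  assumes "p \<in> {0..1}" "0 \<le> t" "\<bar>\<epsilon>\<bar> = 1" "\<And>i. i \<in> S \<Longrightarrow> k * t \<le> \<epsilon> * (real i - p * k)"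
  shows "measure_pmf.prob (binomial_pmf k p) S \<le> exp (- (k * t^2) / (2 * (p * (1 - p)) + 2 * t / 3))"
proof (cases "p = 0 \<or> p = 1")
  case True
  \<comment> \<open>the distribution is concentrated at \<open>p * k\<close>, so \<open>S\<close> is either null or the bound is trivial\<close>
  show ?thesis
  proof (cases "S \<inter> set_pmf (binomial_pmf k p) = {}")
    case True
    then show ?thesis
      by (simp add: measure_Int_set_pmf[symmetric])
  next
    case False
    with \<open>p = 0 \<or> p = 1\<close> obtain i where "i \<in> S" "real i = p * k"
      by auto
    then have "k * t \<le> 0"
      using assms(4)[of i] by simp
    moreover have "0 \<le> k * t"
      using assms(2) by simp
    ultimately have "- (k * t^2) / (2 * (p * (1 - p)) + 2 * t / 3) = 0"
      by (simp add: power2_eq_square)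
    then show ?thesis
      by (metis exp_zero measure_pmf.prob_le_1)
  qed
next
  case False
  define \<sigma>2 where "\<sigma>2 = p * (1 - p)"
  define D where "D = \<sigma>2 + t / 3"
  \<comment> \<open>the classical choice of \<open>l\<close>, which turns the exponent into \<open>- k t\<^sup>2 / (2 D)\<close>\<close>
  define l where "l = t / D"
  have "0 < \<sigma>2"
    using assms False by (auto simp: \<sigma>2_def)
  then have "0 < D"
    using assms by (simp add: D_def add_pos_nonneg)
  have l: "0 \<le> l" "l < 3"
    using \<open>0 < \<sigma>2\<close> \<open>0 < D\<close> assms by (auto simp: l_def D_def field_simps)
  have \<epsilon>2: "\<epsilon> * (\<epsilon> * x) = x" for x
    using assms by (metis abs_mult_self_eq mult.assoc mult_1_left)
  have "measure_pmf.prob (binomial_pmf k p) S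
      \<le> exp (- (\<epsilon> * l * (p * k + \<epsilon> * k * t))) * (p * exp (\<epsilon> * l) + (1 - p)) ^ k"
  proof (rule binomial_prob_le_exp_moment)
    fix i assume "i \<in> S"
    then have "l * (k * t) \<le> l * (\<epsilon> * (real i - p * k))"
      using assms l by (intro mult_left_mono) auto
    then show "\<epsilon> * l * (p * k + \<epsilon> * k * t) \<le> \<epsilon> * l * real i"
      by (simp add: algebra_simps \<epsilon>2)
  qed (use assms in auto)
  also have "\<dots> = exp (- (l * k * t)) * (p * exp (l * (\<epsilon> * (1 - p))) + (1 - p) * exp (l * (- \<epsilon> * p))) ^ k"
  proof -
    have "exp (- (\<epsilon> * l * (p * k + \<epsilon> * k * t))) = exp (- (l * k * t)) * exp (- (\<epsilon> * l * p)) ^ k"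
      by (simp add: exp_of_nat_mult[symmetric] flip: exp_add) (simp add: algebra_simps \<epsilon>2)
    moreover have "exp (- (\<epsilon> * l * p)) * (p * exp (\<epsilon> * l) + (1 - p))
        = p * exp (l * (\<epsilon> * (1 - p))) + (1 - p) * exp (l * (- \<epsilon> * p))"
      by (simp add: algebra_simps flip: exp_add)
    ultimately show ?thesis
      by (simp flip: power_mult_distrib)
  qed
  also have "\<dots> \<le> exp (- (l * k * t)) * exp (\<sigma>2 * l^2 / (2 * (1 - l / 3))) ^ k"
    using assms l unfolding \<sigma>2_def
    by (intro mult_left_mono power_mono centered_bernoulli_mgf_le_Bernstein) auto
  also have "\<dots> = exp (k * (\<sigma>2 * l^2 / (2 * (1 - l / 3))) - l * k * t)"
    by (simp add: exp_of_nat_mult[symmetric] flip: exp_add)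
  also have "k * (\<sigma>2 * l^2 / (2 * (1 - l / 3))) - l * k * t = - (k * t^2) / (2 * \<sigma>2 + 2 * t / 3)"
  proof -
    have "1 - l / 3 = \<sigma>2 / D"
      using \<open>0 < D\<close> by (simp add: l_def D_def field_simps)
    then have "\<sigma>2 * l^2 / (2 * (1 - l / 3)) = \<sigma>2 * (t / D)^2 / (2 * (\<sigma>2 / D))"
      by (simp add: l_def)
    also have "\<dots> = t^2 / (2 * D)"
      using \<open>0 < \<sigma>2\<close> \<open>0 < D\<close> by (simp add: power2_eq_square field_simps)
    finally have mgf_exponent: "\<sigma>2 * l^2 / (2 * (1 - l / 3)) = t^2 / (2 * D)" .
    have "2 * \<sigma>2 + 2 * t / 3 = 2 * D"
      by (simp add: D_def)
    then show ?thesis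
      unfolding mgf_exponent using \<open>0 < D\<close> by (simp add: l_def power2_eq_square field_simps)
  qed
  finally show ?thesis
    by (simp add: \<sigma>2_def)
qed

lemma binomial_upper_tail_le_Omega_bound:
  assumes "0 < p" "p \<le> 1" "1 \<le> q" "1 \<le> k"
  shows "measure_pmf.prob (binomial_pmf k p) {i. q * p * k < real i} \<le> Omega_bound p q (real k)"
proof -
  let ?B = "binomial_pmf k p"
  let ?P = "measure_pmf.prob ?B {i. q * p * k < real i}"
  have "?P \<le> (exp (q - 1) / q powr q) powr (p * k)"
    using assms by (intro binomial_tail_Chernoff) (auto intro!: mult_left_mono)
  moreover have "?P \<le> exp (- (k * (p * q - p)^2) / (2 * (p * (1 - p)) + 2 * (p * q - p) / 3))"
    using assms by (intro binomial_tail_Bernstein[where \<epsilon> = 1]) (auto simp: algebra_simps)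
  moreover have "?P \<le> exp (- 2 * p^2 * (q - 1)^2 * k)"
  proof -
    have "?P \<le> measure_pmf.prob ?B {i. p + p * (q - 1) \<le> real i / k}"
      using assms by (intro measure_pmf.finite_measure_mono) (auto simp: field_simps)
    also have "\<dots> \<le> exp (- 2 * k * (p * (q - 1))^2)"
      using assms by (intro binomial_distribution.prob_ge') (auto simp: binomial_distribution_def)
    finally show ?thesis
      by (simp add: power_mult_distrib mult_ac)
  qed
  ultimately show ?thesis
    unfolding Omega_bound_def Let_def by simp
qed

lemma binomial_lower_tail_le_Psi_bound:
  assumes "0 < p" "p \<le> 1" "1 \<le> q" "1 \<le> k"
  shows "measure_pmf.prob (binomial_pmf k p) {i. real i < p * k / q} \<le> Psi_bound p q (real k)"
proof -
  let ?B = "binomial_pmf k p"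
  let ?P = "measure_pmf.prob ?B {i. real i < p * k / q}"
  have "?P \<le> (exp (1 / q - 1) / (1 / q) powr (1 / q)) powr (p * k)"
  proof (rule binomial_tail_Chernoff)
    fix i assume "i \<in> {i. real i < p * k / q}"
    then have "ln (1 / q) * (p * k / q) \<le> ln (1 / q) * real i"
      using assms by (intro mult_left_mono_neg) auto
    then show "ln (1 / q) * (1 / q * p * k) \<le> ln (1 / q) * real i"
      by simp
  qed (use assms in auto)
  also have "exp (1 / q - 1) / (1 / q) powr (1 / q) = exp (1 / q - 1) * q powr (1 / q)"
    using assms by (simp add: powr_divide)
  finally have Chernoff: "?P \<le> (exp (1 / q - 1) * q powr (1 / q)) powr (p * k)" .
  have Bernstein: "?P \<le> exp (- (k * (p - p / q)^2) / (2 * (p * (1 - p)) + 2 * (p - p / q) / 3))"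
    using assms by (intro binomial_tail_Bernstein[where \<epsilon> = "- 1"]) (auto simp: field_simps)
  have Hoeffding: "?P \<le> exp (- 2 * k * (p * q - 1)^2 / q^2)" if "1 < p * q"
  proof -
    have "{i. real i < p * k / q} \<subseteq> {i. real i / k \<le> p - (p - 1 / q)}"
    proof
      fix i assume "i \<in> {i. real i < p * k / q}"
      moreover have "p * k / q \<le> k / q"
        using assms by (intro divide_right_mono) (auto simp: mult_left_le_one_le)
      ultimately have "real i \<le> k / q"
        by simp
      then show "i \<in> {i. real i / k \<le> p - (p - 1 / q)}"
        using assms by (simp add: field_simps)
    qed
    then have "?P \<le> measure_pmf.prob ?B {i. real i / k \<le> p - (p - 1 / q)}"
      by (intro measure_pmf.finite_measure_mono) auto
    also have "\<dots> \<le> exp (- 2 * k * (p - 1 / q)^2)"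
      using assms that
      by (intro binomial_distribution.prob_le') (auto simp: binomial_distribution_def field_simps)
    finally show ?thesis
      using assms by (simp add: power2_eq_square field_simps)
  qed
  show ?thesis
    unfolding Psi_bound_def Let_def using Chernoff Bernstein Hoeffding by simp
qed

lemma map_pmf_of_set_mem_eq_bernoulli:
  assumes "finite B" "B \<noteq> {}"
  shows "map_pmf (\<lambda>x. x \<in> A) (pmf_of_set B) = bernoulli_pmf (card (A \<inter> B) / card B)"
proof (rule pmf_eqI)
  fix b
  have "spmf_of_pmf (map_pmf (\<lambda>x. x \<in> A) (pmf_of_set B))
      = spmf_of_pmf (bernoulli_pmf (card (A \<inter> B) / card B))"
    using map_mem_spmf_of_set[OF assms, of A] assms by (metis map_spmf_of_pmf spmf_of_pmf_pmf_of_set)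
  then show "pmf (map_pmf (\<lambda>x. x \<in> A) (pmf_of_set B)) b = pmf (bernoulli_pmf (card (A \<inter> B) / card B)) b"
    by (metis spmf_spmf_of_pmf)
qed

lemma card_hits_Pi_pmf_of_set_eq_binomial:
  assumes "finite J" "finite B" "B \<noteq> {}"
  shows "map_pmf (\<lambda>s. card {j \<in> J. s j \<in> A}) (Pi_pmf J d (\<lambda>_. pmf_of_set B))
       = binomial_pmf (card J) (card (A \<inter> B) / card B)"
proof -
  let ?p = "real (card (A \<inter> B)) / card B"
  have "card (A \<inter> B) \<le> card B"
    using assms by (intro card_mono) auto
  then have p: "?p \<in> {0..1}"
    using assms by (simp add: card_gt_0_iff)
  have "binomial_pmf (card J) ?p = map_pmf (\<lambda>f. card {j \<in> J. f j}) (Pi_pmf J (d \<in> A) (\<lambda>_. bernoulli_pmf ?p))"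
    using assms p by (intro binomial_pmf_altdef') auto
  also have "Pi_pmf J (d \<in> A) (\<lambda>_. bernoulli_pmf ?p)
      = map_pmf (\<lambda>s. (\<lambda>x. x \<in> A) \<circ> s) (Pi_pmf J d (\<lambda>_. pmf_of_set B))"
    using assms by (simp add: Pi_pmf_map flip: map_pmf_of_set_mem_eq_bernoulli)
  finally show ?thesis
    by (simp add: map_pmf_comp)
qed

lemma qerror_le_if_within_factor:
  assumes "1 \<le> tru" "1 \<le> q" "tru / q \<le> est" "est \<le> q * tru"
  shows "qerror est tru \<le> q"
proof -
  have "0 < tru / q"
    using assms by simp
  then have "0 < est"
    using assms by linarith
  then have "tru / max est 1 \<le> tru / est"
    using assms by (intro divide_left_mono) auto
  also have "\<dots> \<le> q"
    using assms \<open>0 < est\<close> by (simp add: divide_le_eq mult.commute)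
  finally have "tru / max est 1 \<le> q" .
  moreover have "1 \<le> q * tru"
    using assms mult_mono[of 1 q 1 tru] by simp
  then have "max est 1 / tru \<le> q"
    using assms by (simp add: divide_le_eq mult.commute)
  ultimately show ?thesis
    using assms by (simp add: qerror_def max_absorb1)
qed

lemma prob_ge_one_minus_two_tails:
  assumes "\<And>x. x \<notin> U \<Longrightarrow> x \<notin> L \<Longrightarrow> x \<in> A"
  shows "1 - measure_pmf.prob M U - measure_pmf.prob M L \<le> measure_pmf.prob M A"
proof -
  have "U \<union> L \<union> A = UNIV"
    using assms by blast
  then have "1 = measure_pmf.prob M (U \<union> L \<union> A)"
    by simp
  also have "\<dots> \<le> measure_pmf.prob M U + measure_pmf.prob M L + measure_pmf.prob M A"
    using measure_Un_le[of "U \<union> L" M A] measure_Un_le[of U M L] by simp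
  finally show ?thesis
    by simp
qed

lemma sample_pmf_count_eq_binomial:
  fixes t :: "nat \<Rightarrow> 'r" and p :: real
  assumes "1 \<le> n" "real (card {i \<in> {..<n}. P (t i)}) = p * n"
  shows "map_pmf (\<lambda>s. card {j \<in> {..<k}. P (t (s j))}) (sample_pmf n k) = binomial_pmf k p"
proof -
  have "{i. P (t i)} \<inter> {..<n} = {i \<in> {..<n}. P (t i)}"
    by auto
  then have "real (card ({i. P (t i)} \<inter> {..<n})) / real (card {..<n}) = p"
    using assms by simp
  then show ?thesis
    using card_hits_Pi_pmf_of_set_eq_binomial[of "{..<k}" "{..<n}" "{i. P (t i)}" 0] assms
      lessThan_empty_iff[of n]
    unfolding sample_pmf_def by simp
qed

theorem theorem3:
  fixes t :: "nat \<Rightarrow> 'r" and P :: "'r \<Rightarrow> bool"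
    and n k :: nat and p q :: real
  assumes "n \<ge> 1"
    and "real (card {i \<in> {..<n}. P (t i)}) = p * real n"
    and "0 < p" and "p \<le> 1"
    and "k \<ge> 1"
    and "q \<ge> 1"
  shows "measure_pmf.prob (sample_pmf n k)
           {s. qerror (real n / real k * real (card {j \<in> {..<k}. P (t (s j))})) (p * real n) \<le> q}
         \<ge> 1 - Omega_bound p q (real k) - Psi_bound p q (real k)"
proof -
  let ?B = "binomial_pmf k p"
  define good where "good = {x. qerror (real n / real k * real x) (p * real n) \<le> q}"
  have "0 < real (card {i \<in> {..<n}. P (t i)})"
    unfolding assms(2) using assms by simp
  then have "1 \<le> real (card {i \<in> {..<n}. P (t i)})"
    by (simp add: Suc_le_eq)
  then have "1 \<le> p * n"
    unfolding assms(2) .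
  have "1 - Omega_bound p q (real k) - Psi_bound p q (real k)
      \<le> 1 - measure_pmf.prob ?B {i. q * p * k < real i} - measure_pmf.prob ?B {i. real i < p * k / q}"
    using binomial_upper_tail_le_Omega_bound[of p q k] binomial_lower_tail_le_Psi_bound[of p q k]
      assms by simp
  also have "\<dots> \<le> measure_pmf.prob ?B good"
  proof (rule prob_ge_one_minus_two_tails)
    fix i assume "i \<notin> {i. q * p * k < real i}" "i \<notin> {i. real i < p * k / q}"
    then have "p * n / q \<le> real n / real k * real i" "real n / real k * real i \<le> q * (p * n)"
      using assms by (auto simp: field_simps)
    then show "i \<in> good"
      unfolding good_def using \<open>1 \<le> p * n\<close> assms by (auto intro: qerror_le_if_within_factor)
  qed
  also have "\<dots> = measure_pmf.prob (sample_pmf n k)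
      {s. qerror (real n / real k * real (card {j \<in> {..<k}. P (t (s j))})) (p * real n) \<le> q}"
    by (simp add: good_def vimage_def flip: sample_pmf_count_eq_binomial[where P = P and t = t, OF assms(1,2)])
  finally show ?thesis .
qed

end
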